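(* Let $(F_\epsilon)_{\epsilon>0}$ be a perturbation of a cellular automaton such that $\mathcal{M}_{\lim}$ is uniformly approached. Then $\liminf_{\epsilon\to0}\mathrm{diam}(\mathcal{M}_\epsilon)=0$, that is, for all $\delta>0$ and all $\epsilon_0>0$ there exists $\epsilon<\epsilon_0$ with $\mathrm{diam}(\mathcal{M}_\epsilon)<\delta$.
   Context: $\mathcal{A}$ finite; $\mathcal{M}(\mathcal{A}^{\mathbb{Z}})$ is the set of shift-invariant Borel probability measures with the weak topology, metrized by $d_{\mathcal{M}}(\mu,\nu)=\sum_{n\ge0}2^{-n}\frac12\sum_{u\in\mathcal{A}^{[-n,n]}}|\mu([u])-\nu([u])|$. For a compact set $\mathcal{K}$, $\mathrm{diam}(\mathcal{K})=\max\{d_{\mathcal{M}}(\mu,\nu):\mu,\nu\in\mathcal{K}\}$. A perturbation of a CA $F$ (neighborhood $\mathcal{N}$, local rule $f$) is a family $(F_\epsilon)_{\epsilon>0}$ of probabilistic cellular automata with neighborhood $\mathcal{N}$ and local stochastic matrices $f_\epsilon$ with $f_\epsilon(u,f(u))\ge1-\epsilon$, acting on measures via $F_\epsilon(x,[w]_U)=\prod_{i\in U}f_\epsilon(x_{i+\mathcal{N}},w_i)$. $\mathcal{M}_\epsilon$ is the set of $\mu\in\mathcal{M}(\mathcal{A}^{\mathbb{Z}})$ with $F_\epsilon\mu=\mu$; $\mathcal{M}_{\lim}$ is the set of limits of sequences $\mu_n\in\mathcal{M}_{\epsilon_n}$ with $\epsilon_n\to0$, $\epsilon_n>0$. $\mathcal{M}_{\lim}$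 is uniformly approached if for every family $(\pi_\epsilon)_{\epsilon>0}$ with $\pi_\epsilon\in\mathcal{M}_\epsilon$, the set of accumulation points of $\pi_\epsilon$ as $\epsilon\to0$ equals $\mathcal{M}_{\lim}$. *)

theory Defs
  imports "HOL-Probability.Probability"
begin

definition conf_space :: "(int \<Rightarrow> 'a) measure" where
  "conf_space = (\<Pi>\<^sub>M i\<in>(UNIV::int set). count_space (UNIV::'a set))"

definition shift :: "(int \<Rightarrow> 'a) \<Rightarrow> (int \<Rightarrow> 'a)" where
  "shift x = (\<lambda>i. x (i + 1))"

definition Minv :: "(int \<Rightarrow> 'a::finite) measure set" where
  "Minv = {\<mu>. sets \<mu> = sets conf_space \<and> prob_space \<mu> \<and> distr \<mu> \<mu> shift = \<mu>}"

definition cyl :: "int set \<Rightarrow> (int \<Rightarrow> 'a) \<Rightarrow> (int \<Rightarrow> 'a) set" where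
  "cyl U w = {x. \<forall>i\<in>U. x i = w i}"

definition dM :: "(int \<Rightarrow> 'a::finite) measure \<Rightarrow> (int \<Rightarrow> 'a) measure \<Rightarrow> real" where
  "dM \<mu> \<nu> = (\<Sum>n::nat. (1/2)^n * (1/2) *
      (\<Sum>u\<in>(PiE {-int n..int n} (\<lambda>_. (UNIV::'a set))).
          \<bar>measure \<mu> (cyl {-int n..int n} u) - measure \<nu> (cyl {-int n..int n} u)\<bar>))"

definition diamM :: "(int \<Rightarrow> 'a::finite) measure set \<Rightarrow> real" where
  "diamM K = Sup {dM \<mu> \<nu> | \<mu> \<nu>. \<mu> \<in> K \<and> \<nu> \<in> K}"

definition localpat :: "int set \<Rightarrow> (int \<Rightarrow> 'a) \<Rightarrow> int \<Rightarrow> (int \<Rightarrow> 'a)" where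
  "localpat N x i = restrict (\<lambda>j. x (i + j)) N"

definition is_perturbation ::
  "int set \<Rightarrow> ((int \<Rightarrow> 'a::finite) \<Rightarrow> 'a) \<Rightarrow> (real \<Rightarrow> (int \<Rightarrow> 'a) \<Rightarrow> 'a \<Rightarrow> real) \<Rightarrow> bool" where
  "is_perturbation N f fe \<longleftrightarrow> finite N \<and>
     (\<forall>e>0. \<forall>u\<in>PiE N (\<lambda>_. UNIV).
        (\<forall>b. fe e u b \<ge> 0) \<and> (\<Sum>b\<in>UNIV. fe e u b) = 1 \<and> fe e u (f u) \<ge> 1 - e)"

definition PCA_kernel ::
  "int set \<Rightarrow> ((int \<Rightarrow> 'a) \<Rightarrow> 'a \<Rightarrow> real) \<Rightarrow> (int \<Rightarrow> 'a) \<Rightarrow> int set \<Rightarrow> (int \<Rightarrow> 'a) \<Rightarrow> real" where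
  "PCA_kernel N g x U w = (\<Prod>i\<in>U. g (localpat N x i) (w i))"

text \<open>F_eps mu = mu, i.e. (F_eps mu)([w]_U) = integral of F_eps(x,[w]_U) d mu(x) equals
  mu([w]_U) for every finite U and every w (cylinders determine the measure).\<close>
definition Meps :: "int set \<Rightarrow> (real \<Rightarrow> (int \<Rightarrow> 'a::finite) \<Rightarrow> 'a \<Rightarrow> real) \<Rightarrow> real \<Rightarrow>
     (int \<Rightarrow> 'a) measure set" where
  "Meps N fe e = {\<mu> \<in> Minv. \<forall>U w. finite U \<longrightarrow>
      (\<integral>x. PCA_kernel N (fe e) x U w \<partial>\<mu>) = measure \<mu> (cyl U w)}"

definition Mlim :: "int set \<Rightarrow> (real \<Rightarrow> (int \<Rightarrow> 'a::finite) \<Rightarrow> 'a \<Rightarrow> real) \<Rightarrow>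
     (int \<Rightarrow> 'a) measure set" where
  "Mlim N fe = {\<mu> \<in> Minv. \<exists>en :: nat \<Rightarrow> real. \<exists>\<mu>n.
      (\<forall>n. en n > 0) \<and> en \<longlonglongrightarrow> 0 \<and> (\<forall>n. \<mu>n n \<in> Meps N fe (en n)) \<and>
      (\<lambda>n. dM (\<mu>n n) \<mu>) \<longlonglongrightarrow> 0}"

definition acc_points :: "(real \<Rightarrow> (int \<Rightarrow> 'a::finite) measure) \<Rightarrow> (int \<Rightarrow> 'a) measure set" where
  "acc_points \<pi> = {\<mu> \<in> Minv. \<forall>r>0. \<exists>\<^sub>F e in at_right 0. dM (\<pi> e) \<mu> < r}"

definition uniformly_approached :: "int set \<Rightarrow> (real \<Rightarrow> (int \<Rightarrow> 'a::finite) \<Rightarrow> 'a \<Rightarrow> real) \<Rightarrow> bool" where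
  "uniformly_approached N fe \<longleftrightarrow>
     (\<forall>\<pi>. (\<forall>e>0. \<pi> e \<in> Meps N fe e) \<longrightarrow> acc_points \<pi> = Mlim N fe)"

end

theory Submission
  imports Defs "HOL-Library.Diagonal_Subsequence"
begin

text \<open>A probability measure on \<open>A\<^sup>\<int>\<close> is determined by its cylinder probabilities,
  and every consistent family of cylinder weights comes from such a measure (Kolmogorov extension,
  the continuity condition being supplied by compactness of \<open>A\<^sup>\<int>\<close>). As there are only
  countably many cylinders, a diagonal argument makes every sequence of shift-invariant measures
  converge cylinderwise, i.e. in \<open>d\<^sub>M\<close>, along a subsequence. This yields first that every
  \<open>M\<^sub>\<epsilon>\<close> is nonempty (Krylov--Bogolyubov: a cylinderwise limit of Cesaro averages of the
  iterates \<open>F\<^sub>\<epsilon>\<^sup>k \<mu>\<^sub>0\<close> is \<open>F\<^sub>\<epsilon>\<close>-invariant), and then an element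
  \<open>\<rho>\<close> of \<open>M\<^sub>l\<^sub>i\<^sub>m\<close>.

  Now choose \<open>\<pi>\<^sub>\<epsilon> \<in> M\<^sub>\<epsilon>\<close> at distance more than \<open>\<delta>/3\<close> from \<open>\<rho>\<close>
  whenever \<open>M\<^sub>\<epsilon>\<close> contains such a measure. By uniform approach \<open>\<rho>\<close> is an
  accumulation point of \<open>\<pi>\<^sub>\<epsilon>\<close>, so for arbitrarily small \<open>\<epsilon>\<close> we get
  \<open>d\<^sub>M(\<pi>\<^sub>\<epsilon>, \<rho>) < \<delta>/3\<close>; by the choice of \<open>\<pi>\<^sub>\<epsilon>\<close> all of
  \<open>M\<^sub>\<epsilon>\<close> then lies within \<open>\<delta>/3\<close> of \<open>\<rho>\<close>, so its diameter is at most
  \<open>2\<delta>/3\<close>.\<close>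

section \<open>Cylinders and consistent families\<close>

abbreviation patterns :: "int set \<Rightarrow> (int \<Rightarrow> 'a) set" where
  "patterns J \<equiv> PiE J (\<lambda>_. UNIV)"

definition conf_prob :: "(int \<Rightarrow> 'a) measure \<Rightarrow> bool" where
  "conf_prob \<mu> \<longleftrightarrow> sets \<mu> = sets conf_space \<and> prob_space \<mu>"

lemma conf_prob_prob_space: "conf_prob \<mu> \<Longrightarrow> prob_space \<mu>"
  by (simp add: conf_prob_def)

lemma space_conf_space [simp]: "space (conf_space :: (int \<Rightarrow> 'a) measure) = UNIV"
  by (simp add: conf_space_def space_PiM PiE_UNIV_domain)

lemma conf_prob_space: "conf_prob \<mu> \<Longrightarrow> space \<mu> = UNIV"
  unfolding conf_prob_def by (metis sets_eq_imp_space_eq space_conf_space)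

lemma finite_patterns: "finite J \<Longrightarrow> finite (patterns J :: (int \<Rightarrow> 'a::finite) set)"
  by (intro finite_PiE) auto

lemma cyl_restrict: "cyl J (restrict w J) = cyl J w"
  by (auto simp: cyl_def)

lemma cyl_iff_restrict: "u \<in> patterns J \<Longrightarrow> x \<in> cyl J u \<longleftrightarrow> restrict x J = u"
  by (auto simp: cyl_def PiE_iff extensional_def restrict_def)

lemma restrict_vimage_eq_UN_cyl:
  assumes "X \<subseteq> patterns J"
  shows "{x. restrict x J \<in> X} = (\<Union>u\<in>X. cyl J u)"
proof (intro equalityI subsetI)
  fix x assume "x \<in> {x. restrict x J \<in> X}"
  then show "x \<in> (\<Union>u\<in>X. cyl J u)" by (auto simp: cyl_def intro!: bexI[of _ "restrict x J"])
next
  fix x assume "x \<in> (\<Union>u\<in>X. cyl J u)"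
  then obtain u where "u \<in> X" "x \<in> cyl J u" by auto
  then show "x \<in> {x. restrict x J \<in> X}" using assms cyl_iff_restrict[of u J x] by auto
qed

lemma prod_emb_count_space_UNIV:
  "prod_emb UNIV (\<lambda>_::int. count_space UNIV) J X = {x. restrict x J \<in> X}"
  by (auto simp: prod_emb_def PiE_UNIV_domain)

lemma cyl_in_sets_conf_space: "finite J \<Longrightarrow> cyl J w \<in> sets conf_space"
proof -
  assume "finite J"
  have "cyl J w = prod_emb UNIV (\<lambda>_. count_space UNIV) J (PiE J (\<lambda>j. {w j}))"
    by (auto simp: cyl_def prod_emb_def PiE_iff)
  also have "\<dots> \<in> sets conf_space"
    unfolding conf_space_def using \<open>finite J\<close> by (intro sets_PiM_I) auto
  finally show ?thesis .
qed

lemma conf_prob_sets_cyl: "conf_prob \<mu> \<Longrightarrow> finite J \<Longrightarrow> cyl J w \<in> sets \<mu>"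
  using cyl_in_sets_conf_space unfolding conf_prob_def by auto

lemma measure_restrict_vimage:
  fixes \<mu> :: "(int \<Rightarrow> 'a::finite) measure"
  assumes \<mu>: "conf_prob \<mu>" and J: "finite J" and X: "X \<subseteq> patterns J"
  shows "measure \<mu> {x. restrict x J \<in> X} = (\<Sum>u\<in>X. measure \<mu> (cyl J u))"
proof -
  interpret prob_space \<mu> using \<mu> by (rule conf_prob_prob_space)
  have "disjoint_family_on (cyl J) X"
    unfolding disjoint_family_on_def
  proof (intro ballI impI)
    fix u v assume "u \<in> X" "v \<in> X" "u \<noteq> v"
    then have "u \<in> patterns J" "v \<in> patterns J" using X by auto
    then show "cyl J u \<inter> cyl J v = {}"
      using \<open>u \<noteq> v\<close> cyl_iff_restrict[of u J] cyl_iff_restrict[of v J] by auto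
  qed
  moreover have "finite X"
    using X finite_patterns[OF J] by (rule finite_subset)
  ultimately show ?thesis
    unfolding restrict_vimage_eq_UN_cyl[OF X]
    by (intro measure_finite_Union) (auto intro: conf_prob_sets_cyl[OF \<mu> J])
qed

text \<open>A consistent family \<open>c J u\<close> plays the role of the cylinder probabilities
  \<open>\<mu>([u]\<^sub>J)\<close> of a probability measure, which it determines by Kolmogorov's extension
  theorem. Patterns are extensional, so \<open>\<lambda>_. undefined\<close> is the only pattern on \<open>{}\<close>.\<close>

definition consistent_family :: "(int set \<Rightarrow> (int \<Rightarrow> 'a) \<Rightarrow> real) \<Rightarrow> bool" where
  "consistent_family c \<longleftrightarrow>
     (\<forall>J u. finite J \<longrightarrow> u \<in> patterns J \<longrightarrow> c J u \<ge> 0) \<and> c {} (\<lambda>_. undefined) = 1 \<and>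
     (\<forall>J H u. finite H \<longrightarrow> J \<subseteq> H \<longrightarrow> u \<in> patterns J \<longrightarrow>
        c J u = (\<Sum>v\<in>{v\<in>patterns H. restrict v J = u}. c H v))"

lemma
  assumes "consistent_family c"
  shows consistent_family_nonneg: "finite J \<Longrightarrow> u \<in> patterns J \<Longrightarrow> c J u \<ge> 0"
    and consistent_family_empty: "c {} (\<lambda>_. undefined) = 1"
    and consistent_family_marginal: "finite H \<Longrightarrow> J \<subseteq> H \<Longrightarrow> u \<in> patterns J \<Longrightarrow>
          c J u = (\<Sum>v\<in>{v\<in>patterns H. restrict v J = u}. c H v)"
  using assms unfolding consistent_family_def by blast+

lemma consistent_family_sum_eq_1:
  assumes "consistent_family c" "finite H"
  shows "(\<Sum>v\<in>patterns H. c H v) = 1"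
proof -
  have all_patterns: "{v\<in>patterns H. restrict v {} = (\<lambda>_. undefined)} = patterns H" by auto
  have "c {} (\<lambda>_. undefined) = (\<Sum>v\<in>{v\<in>patterns H. restrict v {} = (\<lambda>_. undefined)}. c H v)"
    using assms by (intro consistent_family_marginal) auto
  then show ?thesis by (simp only: all_patterns consistent_family_empty[OF assms(1)])
qed

lemma consistent_family_le_1:
  fixes c :: "int set \<Rightarrow> (int \<Rightarrow> 'a::finite) \<Rightarrow> real"
  assumes c: "consistent_family c" and H: "finite H" and u: "u \<in> patterns H"
  shows "c H u \<le> 1"
proof -
  have "c H u \<le> (\<Sum>v\<in>patterns H. c H v)"
    using u by (intro member_le_sum finite_patterns H) (auto intro: consistent_family_nonneg[OF c H])
  then show ?thesis using consistent_family_sum_eq_1[OF c H] by simp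
qed

definition cyl_family :: "(int \<Rightarrow> 'a) measure \<Rightarrow> int set \<Rightarrow> (int \<Rightarrow> 'a) \<Rightarrow> real" where
  "cyl_family \<mu> J u = measure \<mu> (cyl J u)"

lemma consistent_family_cyl_family:
  fixes \<mu> :: "(int \<Rightarrow> 'a::finite) measure"
  assumes \<mu>: "conf_prob \<mu>"
  shows "consistent_family (cyl_family \<mu>)"
proof -
  interpret prob_space \<mu> using \<mu> by (rule conf_prob_prob_space)
  have "cyl {} (\<lambda>_. undefined) = space \<mu>"
    using conf_prob_space[OF \<mu>] by (auto simp: cyl_def)
  then have empty: "cyl_family \<mu> {} (\<lambda>_. undefined) = 1"
    by (simp add: cyl_family_def prob_space)
  have "cyl_family \<mu> J u = (\<Sum>v\<in>{v\<in>patterns H. restrict v J = u}. cyl_family \<mu> H v)"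
    if H: "finite H" "J \<subseteq> H" "u \<in> patterns J" for J H u
  proof -
    have "restrict (restrict x H) J = restrict x J" for x :: "int \<Rightarrow> 'a"
      using H(2) by (intro ext) (auto simp: restrict_def)
    then have "{x. restrict x H \<in> {v\<in>patterns H. restrict v J = u}} = cyl J u"
      using cyl_iff_restrict[OF H(3)] by auto
    then have "cyl_family \<mu> J u = measure \<mu> {x. restrict x H \<in> {v\<in>patterns H. restrict v J = u}}"
      by (simp add: cyl_family_def)
    also have "\<dots> = (\<Sum>v\<in>{v\<in>patterns H. restrict v J = u}. cyl_family \<mu> H v)"
      unfolding cyl_family_def by (rule measure_restrict_vimage[OF \<mu> H(1)]) auto
    finally show ?thesis .
  qed
  moreover have "cyl_family \<mu> J u \<ge> 0" for J u by (simp add: cyl_family_def)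
  ultimately show ?thesis using empty unfolding consistent_family_def by blast
qed

section \<open>Kolmogorov extension on the full shift\<close>

lemma sets_PiM_count_space_finite:
  assumes J: "finite J"
  shows "sets (PiM J (\<lambda>_. count_space (UNIV::'a::finite set))) = Pow (patterns J)"
proof (rule antisym)
  show "sets (PiM J (\<lambda>_. count_space UNIV)) \<subseteq> Pow (patterns J)"
    using sets.sets_into_space by (fastforce simp: space_PiM)
  show "Pow (patterns J) \<subseteq> sets (PiM J (\<lambda>_. count_space (UNIV::'a set)))"
  proof
    fix X assume X: "X \<in> Pow (patterns J :: (int \<Rightarrow> 'a) set)"
    have "X = (\<Union>u\<in>X. PiE J (\<lambda>j. {u j}))"
    proof (intro equalityI subsetI)
      fix x assume "x \<in> X"
      then show "x \<in> (\<Union>u\<in>X. PiE J (\<lambda>j. {u j}))" using X by (auto simp: PiE_iff)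
    next
      fix x assume "x \<in> (\<Union>u\<in>X. PiE J (\<lambda>j. {u j}))"
      then obtain u where u: "u \<in> X" "x \<in> PiE J (\<lambda>j. {u j})" by auto
      have "x = u"
      proof
        fix i show "x i = u i" using u X by (cases "i \<in> J") (auto simp: PiE_iff extensional_def)
      qed
      then show "x \<in> X" using u by simp
    qed
    also have "\<dots> \<in> sets (PiM J (\<lambda>_. count_space (UNIV::'a set)))"
      using X finite_patterns[OF J] J
      by (intro sets.finite_UN sets_PiM_I_finite) (auto intro: finite_subset)
    finally show "X \<in> sets (PiM J (\<lambda>_. count_space UNIV))" .
  qed
qed

abbreviation full_shift_topology :: "(int \<Rightarrow> 'a) topology" where
  "full_shift_topology \<equiv> product_topology (\<lambda>_. discrete_topology UNIV) UNIV"

lemma closedin_cyl: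
  assumes "finite J"
  shows "closedin full_shift_topology (cyl J u)"
proof (cases "J = {}")
  case True
  then show ?thesis
    using closedin_topspace[of full_shift_topology] by (simp add: cyl_def PiE_UNIV_domain)
next
  case False
  have "cyl J u = (\<Inter>j\<in>J. {x \<in> topspace full_shift_topology. x j \<in> {u j}})"
    using False by (auto simp: cyl_def PiE_UNIV_domain)
  also have "closedin full_shift_topology \<dots>"
  proof (intro closedin_Inter)
    have "closedin full_shift_topology {x \<in> topspace full_shift_topology. x j \<in> {u j}}" for j
      by (rule closedin_continuous_map_preimage[OF continuous_map_product_projection]) auto
    then show "closedin full_shift_topology S"
      if "S \<in> (\<lambda>j. {x \<in> topspace full_shift_topology. x j \<in> {u j}}) ` J" for S
      using that by blast
  qed (use False in auto)
  finally show ?thesis .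
qed

text \<open>Compactness of \<open>A\<^sup>\<int>\<close>, in the form of the continuity condition of the
  extension theorem for projective families.\<close>

lemma decseq_restrict_vimage_Inter_nonempty:
  fixes Xs :: "nat \<Rightarrow> (int \<Rightarrow> 'a::finite) set"
  assumes "\<And>i. finite (Js i)" "\<And>i. Xs i \<subseteq> patterns (Js i)" "\<And>i. Xs i \<noteq> {}"
    and "decseq (\<lambda>i. {x. restrict x (Js i) \<in> Xs i})"
  shows "(\<Inter>i. {x. restrict x (Js i) \<in> Xs i}) \<noteq> {}"
proof (rule compact_space_imp_nest[of "full_shift_topology :: (int \<Rightarrow> 'a) topology"])
  show "compact_space (full_shift_topology :: (int \<Rightarrow> 'a) topology)"
    by (simp add: compact_space_product_topology compact_space_discrete_topology)
  fix n
  have "finite (Xs n)" by (rule finite_subset[OF assms(2) finite_patterns[OF assms(1)]])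
  then show "closedin full_shift_topology {x. restrict x (Js n) \<in> Xs n}"
    unfolding restrict_vimage_eq_UN_cyl[OF assms(2)]
    by (intro closedin_Union) (auto intro: closedin_cyl assms(1))
  obtain u where "u \<in> Xs n" using assms(3) by blast
  then have "u \<in> {x. restrict x (Js n) \<in> Xs n}" using assms(2)[of n] by auto
  then show "{x. restrict x (Js n) \<in> Xs n} \<noteq> {}" by blast
qed (use assms(4) in simp)

definition pattern_measure :: "(int set \<Rightarrow> (int \<Rightarrow> 'a) \<Rightarrow> real) \<Rightarrow> int set \<Rightarrow> (int \<Rightarrow> 'a) measure" where
  "pattern_measure c J = point_measure (patterns J) (\<lambda>u. ennreal (c J u))"

lemma space_pattern_measure: "space (pattern_measure c J) = patterns J"
  by (simp add: pattern_measure_def space_point_measure)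

lemma sets_pattern_measure:
  "finite J \<Longrightarrow> sets (pattern_measure c J) = sets (PiM J (\<lambda>_. count_space (UNIV::'a::finite set)))"
  by (simp add: pattern_measure_def sets_point_measure sets_PiM_count_space_finite)

lemma emeasure_pattern_measure:
  fixes c :: "int set \<Rightarrow> (int \<Rightarrow> 'a::finite) \<Rightarrow> real"
  shows "finite J \<Longrightarrow> X \<subseteq> patterns J \<Longrightarrow> emeasure (pattern_measure c J) X = (\<Sum>u\<in>X. ennreal (c J u))"
  unfolding pattern_measure_def by (intro emeasure_point_measure_finite finite_patterns)

lemma consistent_family_sum_restrict_vimage:
  fixes c :: "int set \<Rightarrow> (int \<Rightarrow> 'a::finite) \<Rightarrow> real"
  assumes c: "consistent_family c" and H: "finite H" and JH: "J \<subseteq> H" and X: "X \<subseteq> patterns J"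
  shows "(\<Sum>v\<in>{v\<in>patterns H. restrict v J \<in> X}. c H v) = (\<Sum>u\<in>X. c J u)"
proof -
  have J: "finite J" using H JH by (rule finite_subset[rotated])
  have "(\<Sum>v\<in>{v\<in>patterns H. restrict v J \<in> X}. c H v) =
      (\<Sum>u\<in>X. \<Sum>v\<in>{v\<in>{v\<in>patterns H. restrict v J \<in> X}. restrict v J = u}. c H v)"
    using finite_patterns[OF H] finite_subset[OF X finite_patterns[OF J]]
    by (intro sum.group[symmetric]) auto
  also have "\<dots> = (\<Sum>u\<in>X. c J u)"
  proof (rule sum.cong[OF refl])
    fix u assume u: "u \<in> X"
    then have "{v\<in>{v\<in>patterns H. restrict v J \<in> X}. restrict v J = u} = {v\<in>patterns H. restrict v J = u}"
      by auto
    then show "(\<Sum>v\<in>{v\<in>{v\<in>patterns H. restrict v J \<in> X}. restrict v J = u}. c H v) = c J u"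
      using consistent_family_marginal[OF c H JH] u X by auto
  qed
  finally show ?thesis .
qed

lemma pattern_measure_marginal:
  fixes c :: "int set \<Rightarrow> (int \<Rightarrow> 'a::finite) \<Rightarrow> real"
  assumes c: "consistent_family c" and H: "finite H" and JH: "J \<subseteq> H"
  shows "pattern_measure c J =
    distr (pattern_measure c H) (PiM J (\<lambda>_. count_space UNIV)) (\<lambda>v. restrict v J)"
proof (rule measure_eqI)
  have J: "finite J" using H JH by (rule finite_subset[rotated])
  then show sets_eq: "sets (pattern_measure c J) =
      sets (distr (pattern_measure c H) (PiM J (\<lambda>_. count_space UNIV)) (\<lambda>v. restrict v J))"
    by (simp add: sets_pattern_measure)
  have restrict_measurable:
    "(\<lambda>v. restrict v J) \<in> measurable (pattern_measure c H) (PiM J (\<lambda>_. count_space UNIV))"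
  proof -
    have "measurable (pattern_measure c H) (PiM J (\<lambda>_. count_space UNIV)) =
        measurable (count_space (patterns H)) (PiM J (\<lambda>_. count_space (UNIV::'a set)))"
      by (rule measurable_cong_sets) (auto simp: pattern_measure_def sets_point_measure)
    then show ?thesis by (auto simp: space_PiM)
  qed
  fix X assume X_sets: "X \<in> sets (pattern_measure c J)"
  then have X: "X \<subseteq> patterns J" by (simp add: pattern_measure_def sets_point_measure)
  have "emeasure (distr (pattern_measure c H) (PiM J (\<lambda>_. count_space UNIV)) (\<lambda>v. restrict v J)) X
      = emeasure (pattern_measure c H) {v\<in>patterns H. restrict v J \<in> X}"
    using X_sets sets_eq restrict_measurable
    by (subst emeasure_distr) (auto simp: space_pattern_measure Int_def conj_commute)
  also have "\<dots> = ennreal (\<Sum>v\<in>{v\<in>patterns H. restrict v J \<in> X}. c H v)"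
    by (subst emeasure_pattern_measure[OF H]) (auto intro!: sum_ennreal consistent_family_nonneg[OF c H])
  also have "\<dots> = ennreal (\<Sum>u\<in>X. c J u)"
    by (simp add: consistent_family_sum_restrict_vimage[OF c H JH X])
  also have "\<dots> = emeasure (pattern_measure c J) X"
    using X by (subst emeasure_pattern_measure[OF J X])
      (auto intro!: sum_ennreal[symmetric] consistent_family_nonneg[OF c J])
  finally show "emeasure (pattern_measure c J) X =
      emeasure (distr (pattern_measure c H) (PiM J (\<lambda>_. count_space UNIV)) (\<lambda>v. restrict v J)) X"
    by simp
qed

lemma prob_space_pattern_measure:
  fixes c :: "int set \<Rightarrow> (int \<Rightarrow> 'a::finite) \<Rightarrow> real"
  assumes c: "consistent_family c" and J: "finite J"
  shows "prob_space (pattern_measure c J)"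
proof (rule prob_spaceI)
  have "emeasure (pattern_measure c J) (space (pattern_measure c J)) = (\<Sum>u\<in>patterns J. ennreal (c J u))"
    using J by (simp add: space_pattern_measure emeasure_pattern_measure)
  also have "\<dots> = ennreal (\<Sum>u\<in>patterns J. c J u)"
    using J by (intro sum_ennreal consistent_family_nonneg[OF c]) auto
  also have "\<dots> = 1" using consistent_family_sum_eq_1[OF c J] by simp
  finally show "emeasure (pattern_measure c J) (space (pattern_measure c J)) = 1" .
qed

lemma projective_family_pattern_measure:
  "consistent_family c \<Longrightarrow> projective_family UNIV (pattern_measure c) (\<lambda>_. count_space (UNIV::'a::finite set))"
  by (rule projective_family.intro)
    (blast intro: pattern_measure_marginal, blast intro: prob_space_pattern_measure)

lemma emeasure_lim_pattern_measure:
  fixes c :: "int set \<Rightarrow> (int \<Rightarrow> 'a::finite) \<Rightarrow> real"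
  assumes c: "consistent_family c" and J: "finite J" and X: "X \<subseteq> patterns J"
  shows "emeasure (projective_family.lim UNIV (pattern_measure c) (\<lambda>_. count_space UNIV))
      {x. restrict x J \<in> X} = emeasure (pattern_measure c J) X"
proof -
  interpret projective_family UNIV "pattern_measure c" "\<lambda>_. count_space UNIV"
    using c by (rule projective_family_pattern_measure)
  have "emeasure lim (emb UNIV J X) = emeasure (pattern_measure c J) X"
  proof (rule emeasure_lim)
    fix Js and Xs :: "nat \<Rightarrow> (int \<Rightarrow> 'a) set"
    assume Js: "\<And>i. finite (Js i)" and Xs: "\<And>i. Xs i \<in> sets (PiM (Js i) (\<lambda>_. count_space UNIV))"
      and dec: "decseq (\<lambda>i. emb UNIV (Js i) (Xs i))"
      and pos: "0 < (INF i. emeasure (pattern_measure c (Js i)) (Xs i))"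
    have nonzero: "emeasure (pattern_measure c (Js i)) (Xs i) \<noteq> 0" for i
      using pos INF_lower[of i UNIV "\<lambda>i. emeasure (pattern_measure c (Js i)) (Xs i)"] by auto
    have "Xs i \<noteq> {}" for i using nonzero[of i] by auto
    then show "(\<Inter>i. emb UNIV (Js i) (Xs i)) \<noteq> {}"
      using dec Js Xs unfolding prod_emb_count_space_UNIV
      by (intro decseq_restrict_vimage_Inter_nonempty) (auto simp: sets_PiM_count_space_finite)
  qed (use J X in \<open>auto simp: sets_PiM_count_space_finite\<close>)
  then show ?thesis by (simp add: prod_emb_count_space_UNIV)
qed

lemma consistent_family_extension:
  fixes c :: "int set \<Rightarrow> (int \<Rightarrow> 'a::finite) \<Rightarrow> real"
  assumes c: "consistent_family c"
  obtains \<mu> where "conf_prob \<mu>" and "\<And>J u. finite J \<Longrightarrow> u \<in> patterns J \<Longrightarrow> measure \<mu> (cyl J u) = c J u"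
proof -
  interpret projective_family UNIV "pattern_measure c" "\<lambda>_. count_space UNIV"
    using c by (rule projective_family_pattern_measure)
  note lim_emb = emeasure_lim_pattern_measure[OF c]
  have "prob_space lim"
  proof (rule prob_spaceI)
    have "space lim = {x. restrict x {} \<in> {\<lambda>_. undefined}}"
      by (auto simp: space_PiM PiE_UNIV_domain)
    then show "emeasure lim (space lim) = 1"
      using lim_emb[of "{}" "{\<lambda>_. undefined}"] consistent_family_empty[OF c]
      by (simp add: emeasure_pattern_measure)
  qed
  then have "conf_prob lim" by (simp add: conf_prob_def conf_space_def)
  moreover have "measure lim (cyl J u) = c J u" if J: "finite J" and u: "u \<in> patterns J" for J u
  proof -
    have "cyl J u = {x. restrict x J \<in> {u}}" using cyl_iff_restrict[OF u] by auto
    then have "emeasure lim (cyl J u) = ennreal (c J u)"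
      using lim_emb[of J "{u}"] J u by (simp add: emeasure_pattern_measure)
    then show ?thesis using consistent_family_nonneg[OF c J u] by (simp add: measure_def)
  qed
  ultimately show ?thesis by (rule that)
qed

lemma conf_prob_eqI_cyl:
  fixes \<mu> \<nu> :: "(int \<Rightarrow> 'a::finite) measure"
  assumes \<mu>: "conf_prob \<mu>" and \<nu>: "conf_prob \<nu>"
    and eq: "\<And>J u. finite J \<Longrightarrow> u \<in> patterns J \<Longrightarrow> measure \<mu> (cyl J u) = measure \<nu> (cyl J u)"
  shows "\<mu> = \<nu>"
proof (rule measure_eqI_PiM_infinite[where I = UNIV and M = "\<lambda>_. count_space UNIV"])
  interpret \<mu>: prob_space \<mu> using \<mu> by (rule conf_prob_prob_space)
  interpret \<nu>: prob_space \<nu> using \<nu> by (rule conf_prob_prob_space)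
  show "sets \<mu> = sets (PiM UNIV (\<lambda>_. count_space (UNIV::'a set)))"
    "sets \<nu> = sets (PiM UNIV (\<lambda>_. count_space (UNIV::'a set)))"
    using \<mu> \<nu> by (simp_all add: conf_prob_def conf_space_def)
  show "finite_measure \<mu>" by (rule \<mu>.finite_measure_axioms)
  fix A :: "int \<Rightarrow> 'a set" and J :: "int set" assume J: "finite J"
  have A: "PiE J A \<subseteq> patterns J" by auto
  then have "measure \<mu> {x. restrict x J \<in> PiE J A} = measure \<nu> {x. restrict x J \<in> PiE J A}"
    using measure_restrict_vimage[OF \<mu> J A] measure_restrict_vimage[OF \<nu> J A] eq[OF J]
    by (auto intro!: sum.cong)
  then show "emeasure \<mu> (prod_emb UNIV (\<lambda>_. count_space UNIV) J (PiE J A)) =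
             emeasure \<nu> (prod_emb UNIV (\<lambda>_. count_space UNIV) J (PiE J A))"
    by (simp add: prod_emb_count_space_UNIV \<mu>.emeasure_eq_measure \<nu>.emeasure_eq_measure)
qed

section \<open>Shift invariance\<close>

lemma measurable_shift: "shift \<in> measurable conf_space conf_space"
  unfolding conf_space_def shift_def
  by (rule measurable_PiM_single') (auto simp: PiE_UNIV_domain intro!: measurable_component_singleton)

lemma conf_prob_measurable_shift: "conf_prob \<mu> \<Longrightarrow> shift \<in> measurable \<mu> \<mu>"
  using measurable_shift unfolding conf_prob_def
  by (simp add: measurable_cong_sets[of \<mu> conf_space \<mu> conf_space])

lemma shift_vimage_cyl: "shift -` cyl J w = cyl ((\<lambda>i. i + 1) ` J) (\<lambda>i. w (i - 1))"
  by (auto simp: shift_def cyl_def)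

lemma measure_distr_shift_cyl:
  assumes "conf_prob \<mu>" "finite J"
  shows "measure (distr \<mu> \<mu> shift) (cyl J w) = measure \<mu> (cyl ((\<lambda>i. i + 1) ` J) (\<lambda>i. w (i - 1)))"
  using assms
  by (simp add: measure_distr conf_prob_measurable_shift conf_prob_sets_cyl shift_vimage_cyl conf_prob_space)

definition shift_invariant_family :: "(int set \<Rightarrow> (int \<Rightarrow> 'a) \<Rightarrow> real) \<Rightarrow> bool" where
  "shift_invariant_family c \<longleftrightarrow> (\<forall>J w. finite J \<longrightarrow>
     c ((\<lambda>i. i + 1) ` J) (restrict (\<lambda>i. w (i - 1)) ((\<lambda>i. i + 1) ` J)) = c J (restrict w J))"

lemma shift_invariant_family_cong:
  assumes "shift_invariant_family c"
    and "\<And>J u. finite J \<Longrightarrow> u \<in> patterns J \<Longrightarrow> c' J u = c J u"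
  shows "shift_invariant_family c'"
  using assms unfolding shift_invariant_family_def by simp

lemma Minv_iff: "\<mu> \<in> Minv \<longleftrightarrow> conf_prob \<mu> \<and> shift_invariant_family (cyl_family (\<mu> :: (int \<Rightarrow> 'a::finite) measure))"
proof -
  have "distr \<mu> \<mu> shift = \<mu> \<longleftrightarrow> shift_invariant_family (cyl_family \<mu>)" if \<mu>: "conf_prob \<mu>"
  proof -
    interpret prob_space \<mu> using \<mu> by (rule conf_prob_prob_space)
    have distr: "conf_prob (distr \<mu> \<mu> shift)"
      using \<mu> conf_prob_measurable_shift[OF \<mu>] by (auto simp: conf_prob_def intro: prob_space_distr)
    have "distr \<mu> \<mu> shift = \<mu> \<longleftrightarrow>
        (\<forall>J w. finite J \<longrightarrow> measure (distr \<mu> \<mu> shift) (cyl J w) = measure \<mu> (cyl J w))"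
      by (auto intro: conf_prob_eqI_cyl[OF distr \<mu>])
    also have "\<dots> \<longleftrightarrow> shift_invariant_family (cyl_family \<mu>)"
      unfolding shift_invariant_family_def cyl_family_def cyl_restrict
      by (simp add: measure_distr_shift_cyl[OF \<mu>])
    finally show ?thesis .
  qed
  moreover have "\<mu> \<in> Minv \<longleftrightarrow> conf_prob \<mu> \<and> distr \<mu> \<mu> shift = \<mu>"
    by (auto simp: Minv_def conf_prob_def)
  ultimately show ?thesis by blast
qed

lemma Minv_nonempty: "Minv \<noteq> ({} :: (int \<Rightarrow> 'a::finite) measure set)"
proof -
  fix a :: 'a
  define \<mu> where "\<mu> = return conf_space (\<lambda>_::int. a)"
  have "distr \<mu> \<mu> shift = distr \<mu> conf_space shift"
    by (rule distr_cong) (auto simp: \<mu>_def)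
  also have "\<dots> = return conf_space (shift (\<lambda>_. a))"
    unfolding \<mu>_def by (rule distr_return[OF measurable_shift]) simp
  also have "shift (\<lambda>_. a) = (\<lambda>_::int. a)" by (simp add: shift_def)
  finally have "distr \<mu> \<mu> shift = \<mu>" by (simp add: \<mu>_def)
  moreover have "prob_space \<mu>" "sets \<mu> = sets conf_space"
    by (simp_all add: \<mu>_def prob_space_return)
  ultimately show ?thesis by (auto simp: Minv_def)
qed

section \<open>Sequential compactness of shift-invariant measures\<close>

lemma finite_family_convergent_subseq:
  fixes f :: "'i \<Rightarrow> nat \<Rightarrow> real"
  assumes "finite S" "\<And>s k. s \<in> S \<Longrightarrow> \<bar>f s k\<bar> \<le> B"
  shows "\<exists>r. strict_mono r \<and> (\<forall>s\<in>S. convergent (\<lambda>k. f s (r k)))"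
  using assms
proof (induction S rule: finite_induct)
  case empty
  show ?case by (intro exI[of _ id]) (auto simp: strict_mono_def)
next
  case (insert s S)
  then obtain r where r: "strict_mono r" "\<forall>t\<in>S. convergent (\<lambda>k. f t (r k))" by auto
  obtain r' where r': "strict_mono r'" "monoseq (\<lambda>k. f s (r (r' k)))"
    using seq_monosub[of "\<lambda>k. f s (r k)"] by (auto simp: o_def)
  have "Bseq (\<lambda>k. f s (r (r' k)))" using insert.prems by (intro BseqI'[of _ B]) auto
  then have "convergent (\<lambda>k. f s (r (r' k)))" using r'(2) by (rule Bseq_monoseq_convergent)
  moreover have "convergent (\<lambda>k. f t (r (r' k)))" if "t \<in> S" for t
    using convergent_subseq_convergent[OF r(2)[rule_format, OF that] r'(1)] by (simp add: o_def)
  moreover have "strict_mono (\<lambda>k. r (r' k))" using strict_mono_o[OF r(1) r'(1)] by (simp add: o_def)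
  ultimately show ?case by (intro exI[of _ "\<lambda>k. r (r' k)"]) auto
qed

definition window :: "nat \<Rightarrow> int set" where
  "window n = {- int n..int n}"

lemma finite_window [simp]: "finite (window n)"
  by (simp add: window_def)

lemma finite_subset_window:
  assumes "finite J"
  obtains n where "J \<subseteq> window n"
proof
  let ?m = "Max (insert 0 (abs ` J))"
  have "\<bar>i\<bar> \<le> ?m" if "i \<in> J" for i
    using assms that by (intro Max_ge) auto
  moreover have "?m \<ge> 0" using assms by (intro Max_ge) auto
  ultimately show "J \<subseteq> window (nat ?m)"
    by (force simp: window_def abs_le_iff)
qed

text \<open>Bolzano--Weierstrass on each window, then a diagonal subsequence over all windows.\<close>

lemma consistent_family_convergent_subseq:
  fixes c :: "nat \<Rightarrow> int set \<Rightarrow> (int \<Rightarrow> 'a::finite) \<Rightarrow> real"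
  assumes c: "\<And>k. consistent_family (c k)"
  obtains r where "strict_mono r"
    "\<And>J u. finite J \<Longrightarrow> u \<in> patterns J \<Longrightarrow> convergent (\<lambda>k. c (r k) J u)"
proof -
  define P where "P = (\<lambda>n (s::nat \<Rightarrow> nat). \<forall>u\<in>patterns (window n). convergent (\<lambda>k. c (s k) (window n) u))"
  interpret subseqs P
  proof
    fix n and s :: "nat \<Rightarrow> nat"
    have "\<exists>r. strict_mono r \<and> (\<forall>u\<in>patterns (window n). convergent (\<lambda>k. c (s (r k)) (window n) u))"
    proof (rule finite_family_convergent_subseq[where B = 1])
      show "finite (patterns (window n) :: (int \<Rightarrow> 'a) set)" by (simp add: finite_patterns)
      fix u :: "int \<Rightarrow> 'a" and k assume "u \<in> patterns (window n)"
      then show "\<bar>c (s k) (window n) u\<bar> \<le> 1"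
        using consistent_family_nonneg[OF c] consistent_family_le_1[OF c] by (simp add: abs_le_iff)
    qed
    then show "\<exists>r'. strict_mono r' \<and> P n (s \<circ> r')" by (auto simp: P_def o_def)
  qed
  have P_tail: "P n (diagseq \<circ> ((+) (Suc n)))" for n
    by (rule diagseq_holds) (use convergent_subseq_convergent in \<open>auto simp: P_def o_def\<close>)
  have conv_window: "convergent (\<lambda>k. c (diagseq k) (window n) u)" if "u \<in> patterns (window n)" for n u
  proof -
    have "convergent (\<lambda>k. c (diagseq (k + Suc n)) (window n) u)"
      using P_tail[of n] that by (simp add: P_def o_def add.commute)
    then show ?thesis by (rule convergent_ignore_initial_segment[THEN iffD1])
  qed
  have "convergent (\<lambda>k. c (diagseq k) J u)" if J: "finite J" and u: "u \<in> patterns J" for J u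
  proof -
    obtain n where n: "J \<subseteq> window n" using finite_subset_window[OF J] .
    have "convergent (\<lambda>k. \<Sum>v\<in>{v\<in>patterns (window n). restrict v J = u}. c (diagseq k) (window n) v)"
      by (intro convergent_sum conv_window) auto
    moreover have "c (diagseq k) J u =
        (\<Sum>v\<in>{v\<in>patterns (window n). restrict v J = u}. c (diagseq k) (window n) v)" for k
      using n u by (intro consistent_family_marginal[OF c]) auto
    ultimately show ?thesis by simp
  qed
  with subseq_diagseq show ?thesis by (rule that)
qed

lemma consistent_family_limit:
  fixes c :: "nat \<Rightarrow> int set \<Rightarrow> (int \<Rightarrow> 'a::finite) \<Rightarrow> real"
  assumes c: "\<And>k. consistent_family (c k)"
    and lim: "\<And>J u. finite J \<Longrightarrow> u \<in> patterns J \<Longrightarrow> (\<lambda>k. c k J u) \<longlonglongrightarrow> c' J u"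
  shows "consistent_family c'"
  unfolding consistent_family_def
proof (intro conjI allI impI)
  fix J :: "int set" and u :: "int \<Rightarrow> 'a" assume J: "finite J" and u: "u \<in> patterns J"
  show "0 \<le> c' J u"
    by (rule LIMSEQ_le_const[OF lim[OF J u]]) (auto intro: consistent_family_nonneg[OF c J u])
next
  show "c' {} (\<lambda>_. undefined) = 1"
    using lim[of "{}" "\<lambda>_. undefined"] by (simp add: consistent_family_empty[OF c] LIMSEQ_const_iff)
next
  fix J H :: "int set" and u :: "int \<Rightarrow> 'a"
  assume H: "finite H" and JH: "J \<subseteq> H" and u: "u \<in> patterns J"
  have "(\<lambda>k. \<Sum>v\<in>{v\<in>patterns H. restrict v J = u}. c k H v) \<longlonglongrightarrow>
      (\<Sum>v\<in>{v\<in>patterns H. restrict v J = u}. c' H v)"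
    using H by (intro tendsto_sum lim) auto
  moreover have "c k J u = (\<Sum>v\<in>{v\<in>patterns H. restrict v J = u}. c k H v)" for k
    using H JH u by (rule consistent_family_marginal[OF c])
  ultimately show "c' J u = (\<Sum>v\<in>{v\<in>patterns H. restrict v J = u}. c' H v)"
    using lim[OF finite_subset[OF JH H] u] by (auto intro: LIMSEQ_unique)
qed

lemma shift_invariant_family_limit:
  assumes "\<And>k. shift_invariant_family (c k)"
    and "\<And>J u. finite J \<Longrightarrow> u \<in> patterns J \<Longrightarrow> (\<lambda>k. c k J u) \<longlonglongrightarrow> c' J u"
  shows "shift_invariant_family c'"
  unfolding shift_invariant_family_def
proof (intro allI impI)
  fix J :: "int set" and w :: "int \<Rightarrow> 'a" assume J: "finite J"
  let ?J = "(\<lambda>i. i + 1) ` J" and ?w = "restrict (\<lambda>i. w (i - 1)) ((\<lambda>i. i + 1) ` J)"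
  have "(\<lambda>k. c k ?J ?w) \<longlonglongrightarrow> c' ?J ?w" "(\<lambda>k. c k J (restrict w J)) \<longlonglongrightarrow> c' J (restrict w J)"
    using J by (intro assms(2); simp)+
  moreover have "c k ?J ?w = c k J (restrict w J)" for k
    using assms(1) J unfolding shift_invariant_family_def by blast
  ultimately show "c' ?J ?w = c' J (restrict w J)" by (auto intro: LIMSEQ_unique)
qed

lemma Minv_cylinder_limit:
  fixes c :: "nat \<Rightarrow> int set \<Rightarrow> (int \<Rightarrow> 'a::finite) \<Rightarrow> real"
  assumes "\<And>k. consistent_family (c k)" "\<And>k. shift_invariant_family (c k)"
  obtains r \<mu> where "strict_mono r" "\<mu> \<in> Minv"
    "\<And>J u. finite J \<Longrightarrow> u \<in> patterns J \<Longrightarrow> (\<lambda>k. c (r k) J u) \<longlonglongrightarrow> measure \<mu> (cyl J u)"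
proof -
  obtain r where r: "strict_mono r"
    and conv: "\<And>J u. finite J \<Longrightarrow> u \<in> patterns J \<Longrightarrow> convergent (\<lambda>k. c (r k) J u)"
    using consistent_family_convergent_subseq[of c, OF assms(1)] by blast
  define c' where "c' J u = lim (\<lambda>k. c (r k) J u)" for J u
  have lim: "(\<lambda>k. c (r k) J u) \<longlonglongrightarrow> c' J u" if "finite J" "u \<in> patterns J" for J u
    unfolding c'_def using conv[OF that] by (simp add: convergent_LIMSEQ_iff)
  have "consistent_family c'"
    using assms(1) lim by (rule consistent_family_limit)
  then obtain \<mu> where \<mu>: "conf_prob \<mu>"
    and \<mu>c': "\<And>J u. finite J \<Longrightarrow> u \<in> patterns J \<Longrightarrow> measure \<mu> (cyl J u) = c' J u"
    using consistent_family_extension by blast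
  have "shift_invariant_family c'"
    using assms(2) lim by (rule shift_invariant_family_limit)
  then have "shift_invariant_family (cyl_family \<mu>)"
    by (rule shift_invariant_family_cong) (simp add: cyl_family_def \<mu>c')
  with \<mu> have "\<mu> \<in> Minv" by (simp add: Minv_iff)
  with r show ?thesis using lim \<mu>c' by (intro that) auto
qed

section \<open>Invariant measures of probabilistic cellular automata\<close>

lemma Cesaro_average_shift_tendsto_0:
  fixes a :: "nat \<Rightarrow> real"
  assumes bounded: "\<And>k. \<bar>a k\<bar> \<le> B"
  shows "(\<lambda>n. (\<Sum>k\<le>n. a (Suc k)) / (real n + 1) - (\<Sum>k\<le>n. a k) / (real n + 1)) \<longlonglongrightarrow> 0"
proof (rule Lim_null_comparison)
  have "(\<Sum>k\<le>n. a (Suc k)) - (\<Sum>k\<le>n. a k) = a (Suc n) - a 0" for n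
    using sum_lessThan_telescope[of a "Suc n"] by (simp add: lessThan_Suc_atMost sum_subtractf)
  moreover have "\<bar>a (Suc n) - a 0\<bar> \<le> 2 * B" for n
    using bounded[of "Suc n"] bounded[of 0] by linarith
  ultimately have "\<bar>(\<Sum>k\<le>n. a (Suc k)) / (real n + 1) - (\<Sum>k\<le>n. a k) / (real n + 1)\<bar> \<le> 2 * B / real (Suc n)" for n
    by (simp add: diff_divide_distrib[symmetric] abs_divide add.commute divide_right_mono)
  then show "\<forall>\<^sub>F n in sequentially.
      norm ((\<Sum>k\<le>n. a (Suc k)) / (real n + 1) - (\<Sum>k\<le>n. a k) / (real n + 1)) \<le> 2 * B / real (Suc n)"
    by simp
  show "(\<lambda>n. 2 * B / real (Suc n)) \<longlonglongrightarrow> 0"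
    using LIMSEQ_Suc[OF lim_const_over_n[of "2 * B"]] by simp
qed

text \<open>The Krylov--Bogolyubov argument: the Cesaro averages of \<open>b\<close> and of
  \<open>\<lambda>k. b (Suc k)\<close> differ by \<open>O(1/n)\<close>, so they have the same limits.\<close>

lemma Cesaro_limit_invariant:
  fixes a :: "nat \<Rightarrow> 'v \<Rightarrow> real" and b :: "nat \<Rightarrow> real"
  assumes V: "finite V"
    and step: "\<And>k. (\<Sum>v\<in>V. a k v * K v) = b (Suc k)"
    and bounded: "\<And>k. \<bar>b k\<bar> \<le> B"
    and r: "strict_mono r"
    and lim_a: "\<And>v. v \<in> V \<Longrightarrow> (\<lambda>n. (\<Sum>k\<le>r n. a k v) / (real (r n) + 1)) \<longlonglongrightarrow> \<alpha> v"
    and lim_b: "(\<lambda>n. (\<Sum>k\<le>r n. b k) / (real (r n) + 1)) \<longlonglongrightarrow> \<beta>"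
  shows "(\<Sum>v\<in>V. \<alpha> v * K v) = \<beta>"
proof -
  have avg: "(\<Sum>v\<in>V. (\<Sum>k\<le>n. a k v) / (real n + 1) * K v) = (\<Sum>k\<le>n. b (Suc k)) / (real n + 1)" for n
  proof -
    have "(\<Sum>v\<in>V. (\<Sum>k\<le>n. a k v) / (real n + 1) * K v) = (\<Sum>v\<in>V. \<Sum>k\<le>n. a k v * K v) / (real n + 1)"
      by (simp add: sum_divide_distrib sum_distrib_right)
    also have "\<dots> = (\<Sum>k\<le>n. b (Suc k)) / (real n + 1)"
      by (subst sum.swap) (simp add: step)
    finally show ?thesis .
  qed
  have "(\<lambda>n. (\<Sum>v\<in>V. (\<Sum>k\<le>r n. a k v) / (real (r n) + 1) * K v)) \<longlonglongrightarrow> (\<Sum>v\<in>V. \<alpha> v * K v)"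
    by (intro tendsto_sum tendsto_mult tendsto_const lim_a)
  moreover have "(\<lambda>n. (\<Sum>k\<le>r n. b k) / (real (r n) + 1) +
      ((\<Sum>k\<le>r n. b (Suc k)) / (real (r n) + 1) - (\<Sum>k\<le>r n. b k) / (real (r n) + 1))) \<longlonglongrightarrow> \<beta> + 0"
    using LIMSEQ_subseq_LIMSEQ[OF Cesaro_average_shift_tendsto_0[OF bounded] r]
    by (intro tendsto_add lim_b) (simp add: o_def)
  ultimately show ?thesis
    unfolding avg by (auto intro: LIMSEQ_unique)
qed

lemma consistent_family_average:
  fixes c :: "nat \<Rightarrow> int set \<Rightarrow> (int \<Rightarrow> 'a) \<Rightarrow> real"
  assumes "\<And>k. consistent_family (c k)"
  shows "consistent_family (\<lambda>J u. (\<Sum>k\<le>n. c k J u) / (real n + 1))"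
  unfolding consistent_family_def
proof (intro conjI allI impI)
  show "0 \<le> (\<Sum>k\<le>n. c k J u) / (real n + 1)" if "finite J" "u \<in> patterns J" for J and u :: "int \<Rightarrow> 'a"
    using that by (intro divide_nonneg_nonneg sum_nonneg consistent_family_nonneg[OF assms]) auto
  show "(\<Sum>k\<le>n. c k {} (\<lambda>_. undefined)) / (real n + 1) = 1"
    by (simp add: consistent_family_empty[OF assms])
  fix J H :: "int set" and u :: "int \<Rightarrow> 'a"
  assume "finite H" "J \<subseteq> H" "u \<in> patterns J"
  then have "(\<Sum>k\<le>n. c k J u) = (\<Sum>k\<le>n. \<Sum>v\<in>{v\<in>patterns H. restrict v J = u}. c k H v)"
    by (intro sum.cong refl consistent_family_marginal[OF assms])
  then show "(\<Sum>k\<le>n. c k J u) / (real n + 1) =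
      (\<Sum>v\<in>{v\<in>patterns H. restrict v J = u}. (\<Sum>k\<le>n. c k H v) / (real n + 1))"
    by (simp add: sum.swap[of _ "{..n}"] sum_divide_distrib)
qed

lemma shift_invariant_family_average:
  "(\<And>k. shift_invariant_family (c k)) \<Longrightarrow>
    shift_invariant_family (\<lambda>J u. (\<Sum>k\<le>n. c k J u) / (real n + 1))"
  unfolding shift_invariant_family_def by simp

definition neighbourhood :: "int set \<Rightarrow> int set \<Rightarrow> int set" where
  "neighbourhood N J = (\<Union>i\<in>J. (\<lambda>j. i + j) ` N)"

lemma finite_neighbourhood: "finite N \<Longrightarrow> finite J \<Longrightarrow> finite (neighbourhood N J)"
  by (simp add: neighbourhood_def)

lemma in_neighbourhood: "i \<in> J \<Longrightarrow> j \<in> N \<Longrightarrow> i + j \<in> neighbourhood N J"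
  by (auto simp: neighbourhood_def)

lemma localpat_restrict:
  "(\<And>j. j \<in> N \<Longrightarrow> i + j \<in> H) \<Longrightarrow> localpat N (restrict x H) i = localpat N x i"
  by (auto simp: localpat_def restrict_def)

lemma PCA_kernel_restrict:
  assumes "\<And>i j. i \<in> J \<Longrightarrow> j \<in> N \<Longrightarrow> i + j \<in> H"
  shows "PCA_kernel N g (restrict x H) J w = PCA_kernel N g x J w"
  unfolding PCA_kernel_def using assms by (intro prod.cong refl) (simp add: localpat_restrict)

lemma PCA_kernel_restrict_pattern: "PCA_kernel N g x J (restrict w J) = PCA_kernel N g x J w"
  unfolding PCA_kernel_def by (intro prod.cong refl) simp

lemma localpat_shift: "localpat N (shift x) i = localpat N x (i + 1)"
  by (auto simp: localpat_def shift_def algebra_simps)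

text \<open>The kernel only reads the cells in \<open>H\<close>, so it is a simple function on the cylinders over \<open>H\<close>.\<close>

lemma
  fixes \<mu> :: "(int \<Rightarrow> 'a::finite) measure"
  assumes \<mu>: "conf_prob \<mu>" and H: "finite H" and sub: "\<And>i j. i \<in> J \<Longrightarrow> j \<in> N \<Longrightarrow> i + j \<in> H"
  shows integrable_PCA_kernel: "integrable \<mu> (\<lambda>x. PCA_kernel N g x J w)"
    and integral_PCA_kernel: "(\<integral>x. PCA_kernel N g x J w \<partial>\<mu>) =
      (\<Sum>v\<in>patterns H. measure \<mu> (cyl H v) * PCA_kernel N g v J w)"
proof -
  interpret prob_space \<mu> using \<mu> by (rule conf_prob_prob_space)
  have simple: "(\<lambda>x. PCA_kernel N g x J w) =
      (\<lambda>x. \<Sum>v\<in>patterns H. indicator (cyl H v) x * PCA_kernel N g v J w)"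
  proof
    fix x
    have "(\<Sum>v\<in>patterns H. indicator (cyl H v) x * PCA_kernel N g v J w)
        = (\<Sum>v\<in>patterns H. if v = restrict x H then PCA_kernel N g v J w else 0)"
      by (intro sum.cong refl) (auto simp: indicator_def cyl_iff_restrict)
    also have "\<dots> = PCA_kernel N g (restrict x H) J w"
      by (subst sum.delta[OF finite_patterns[OF H]]) auto
    also have "\<dots> = PCA_kernel N g x J w"
      using sub by (rule PCA_kernel_restrict)
    finally show "PCA_kernel N g x J w = (\<Sum>v\<in>patterns H. indicator (cyl H v) x * PCA_kernel N g v J w)" ..
  qed
  have integrable_term: "integrable \<mu> (\<lambda>x. indicator (cyl H v) x * PCA_kernel N g v J w)" for v
    using conf_prob_sets_cyl[OF \<mu> H]
    by (intro integrable_mult_left integrable_real_indicator) (auto simp: less_top[symmetric])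
  show "integrable \<mu> (\<lambda>x. PCA_kernel N g x J w)"
    unfolding simple by (intro Bochner_Integration.integrable_sum integrable_term)
  have "(\<integral>x. PCA_kernel N g x J w \<partial>\<mu>) =
      (\<Sum>v\<in>patterns H. (\<integral>x. indicator (cyl H v) x * PCA_kernel N g v J w \<partial>\<mu>))"
    unfolding simple by (intro Bochner_Integration.integral_sum integrable_term)
  also have "\<dots> = (\<Sum>v\<in>patterns H. measure \<mu> (cyl H v) * PCA_kernel N g v J w)"
    using conf_prob_sets_cyl[OF \<mu> H] by (intro sum.cong refl) (simp add: conf_prob_space[OF \<mu>])
  finally show "(\<integral>x. PCA_kernel N g x J w \<partial>\<mu>) =
      (\<Sum>v\<in>patterns H. measure \<mu> (cyl H v) * PCA_kernel N g v J w)" .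
qed

lemma sum_prod_restrict:
  fixes g :: "int \<Rightarrow> 'a::finite \<Rightarrow> real"
  assumes H: "finite H" and JH: "J \<subseteq> H" and u: "u \<in> patterns J"
    and g1: "\<And>i. i \<in> H \<Longrightarrow> (\<Sum>a\<in>UNIV. g i a) = 1"
  shows "(\<Sum>v\<in>{v\<in>patterns H. restrict v J = u}. \<Prod>i\<in>H. g i (v i)) = (\<Prod>i\<in>J. g i (u i))"
proof -
  define B where "B = (\<lambda>i. if i \<in> J then {u i} else (UNIV::'a set))"
  have "{v\<in>patterns H. restrict v J = u} = PiE H B"
  proof (intro equalityI subsetI)
    fix v assume "v \<in> {v\<in>patterns H. restrict v J = u}"
    then show "v \<in> PiE H B" using JH by (auto simp: B_def PiE_iff restrict_def)
  next
    fix v assume v: "v \<in> PiE H B"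
    have "restrict v J = u"
    proof
      fix i show "restrict v J i = u i"
      proof (cases "i \<in> J")
        case True
        then have "v i \<in> B i" using v JH by (auto simp: PiE_iff)
        then show ?thesis using True by (simp add: B_def)
      next
        case False then show ?thesis using u by (auto simp: PiE_iff extensional_def)
      qed
    qed
    then show "v \<in> {v\<in>patterns H. restrict v J = u}" using v by (auto simp: PiE_iff)
  qed
  then have "(\<Sum>v\<in>{v\<in>patterns H. restrict v J = u}. \<Prod>i\<in>H. g i (v i)) = (\<Prod>i\<in>H. \<Sum>a\<in>B i. g i a)"
    using H by (simp add: prod_sum_PiE B_def)
  also have "\<dots> = (\<Prod>i\<in>H. if i \<in> J then g i (u i) else 1)"
    using g1 by (intro prod.cong refl) (auto simp: B_def)
  also have "\<dots> = (\<Prod>i\<in>J. g i (u i))"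
    using H JH by (simp add: prod.If_cases Int_absorb1)
  finally show ?thesis .
qed

definition PCA_image_family ::
  "int set \<Rightarrow> ((int \<Rightarrow> 'a) \<Rightarrow> 'a \<Rightarrow> real) \<Rightarrow> (int \<Rightarrow> 'a) measure \<Rightarrow> int set \<Rightarrow> (int \<Rightarrow> 'a) \<Rightarrow> real" where
  "PCA_image_family N g \<mu> J u = (\<integral>x. PCA_kernel N g x J u \<partial>\<mu>)"

locale local_stochastic =
  fixes N :: "int set" and g :: "(int \<Rightarrow> 'a::finite) \<Rightarrow> 'a \<Rightarrow> real"
  assumes finite_N: "finite N"
    and g_nonneg: "\<And>u b. u \<in> patterns N \<Longrightarrow> g u b \<ge> 0"
    and g_sum: "\<And>u. u \<in> patterns N \<Longrightarrow> (\<Sum>b\<in>UNIV. g u b) = 1"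
begin

lemma PCA_kernel_nonneg: "PCA_kernel N g x J w \<ge> 0"
  unfolding PCA_kernel_def localpat_def by (intro prod_nonneg g_nonneg) simp

lemma integrable_kernel: "conf_prob \<mu> \<Longrightarrow> finite J \<Longrightarrow> integrable \<mu> (\<lambda>x. PCA_kernel N g x J w)"
  by (rule integrable_PCA_kernel[OF _ finite_neighbourhood[OF finite_N] in_neighbourhood])

lemma PCA_image_family_eq_sum:
  "conf_prob \<mu> \<Longrightarrow> finite J \<Longrightarrow> PCA_image_family N g \<mu> J w =
    (\<Sum>v\<in>patterns (neighbourhood N J). measure \<mu> (cyl (neighbourhood N J) v) * PCA_kernel N g v J w)"
  unfolding PCA_image_family_def
  by (rule integral_PCA_kernel[OF _ finite_neighbourhood[OF finite_N] in_neighbourhood])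

lemma consistent_family_PCA_image:
  assumes \<mu>: "conf_prob \<mu>"
  shows "consistent_family (PCA_image_family N g \<mu>)"
  unfolding consistent_family_def
proof (intro conjI allI impI)
  interpret prob_space \<mu> using \<mu> by (rule conf_prob_prob_space)
  show "0 \<le> PCA_image_family N g \<mu> J u" for J u
    unfolding PCA_image_family_def by (intro Bochner_Integration.integral_nonneg PCA_kernel_nonneg)
  show "PCA_image_family N g \<mu> {} (\<lambda>_. undefined) = 1"
    unfolding PCA_image_family_def PCA_kernel_def using prob_space by simp
  fix J H :: "int set" and u :: "int \<Rightarrow> 'a"
  assume H: "finite H" and JH: "J \<subseteq> H" and u: "u \<in> patterns J"
  have "(\<Sum>v\<in>{v\<in>patterns H. restrict v J = u}. PCA_image_family N g \<mu> H v) =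
      (\<integral>x. (\<Sum>v\<in>{v\<in>patterns H. restrict v J = u}. PCA_kernel N g x H v) \<partial>\<mu>)"
    unfolding PCA_image_family_def
    by (rule Bochner_Integration.integral_sum[symmetric]) (rule integrable_kernel[OF \<mu> H])
  also have "\<dots> = (\<integral>x. PCA_kernel N g x J u \<partial>\<mu>)"
    unfolding PCA_kernel_def
    by (subst sum_prod_restrict[OF H JH u]) (auto simp: localpat_def intro: g_sum)
  finally show "PCA_image_family N g \<mu> J u = (\<Sum>v\<in>{v\<in>patterns H. restrict v J = u}. PCA_image_family N g \<mu> H v)"
    unfolding PCA_image_family_def by simp
qed

lemma shift_invariant_family_PCA_image:
  assumes \<mu>: "\<mu> \<in> Minv"
  shows "shift_invariant_family (PCA_image_family N g \<mu>)"
  unfolding shift_invariant_family_def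
proof (intro allI impI)
  fix J :: "int set" and w :: "int \<Rightarrow> 'a" assume J: "finite J"
  let ?J = "(\<lambda>i. i + 1) ` J"
  have conf: "conf_prob \<mu>" and "distr \<mu> \<mu> shift = \<mu>" using \<mu> by (simp_all add: Minv_def conf_prob_def)
  have "PCA_kernel N g x ?J (restrict (\<lambda>i. w (i - 1)) ?J) = PCA_kernel N g (shift x) J (restrict w J)" for x
  proof -
    have "PCA_kernel N g x ?J (restrict (\<lambda>i. w (i - 1)) ?J) = (\<Prod>i\<in>?J. g (localpat N x i) (w (i - 1)))"
      unfolding PCA_kernel_def by (intro prod.cong refl) auto
    also have "\<dots> = (\<Prod>i\<in>J. g (localpat N x (i + 1)) (w i))"
      by (subst prod.reindex) (auto simp: inj_on_def)
    finally show ?thesis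
      unfolding PCA_kernel_def by (simp add: localpat_shift)
  qed
  moreover have "PCA_image_family N g \<mu> J (restrict w J) =
      (\<integral>x. PCA_kernel N g (shift x) J (restrict w J) \<partial>\<mu>)"
    unfolding PCA_image_family_def
    using integral_distr[OF conf_prob_measurable_shift[OF conf]
        borel_measurable_integrable[OF integrable_kernel[OF conf J]]] \<open>distr \<mu> \<mu> shift = \<mu>\<close>
    by simp
  ultimately show "PCA_image_family N g \<mu> ?J (restrict (\<lambda>i. w (i - 1)) ?J) =
      PCA_image_family N g \<mu> J (restrict w J)"
    unfolding PCA_image_family_def by simp
qed

lemma PCA_image_exists:
  assumes \<mu>: "\<mu> \<in> Minv"
  obtains \<nu> where "\<nu> \<in> Minv"
    "\<And>J u. finite J \<Longrightarrow> u \<in> patterns J \<Longrightarrow> cyl_family \<nu> J u = PCA_image_family N g \<mu> J u"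
proof -
  have conf: "conf_prob \<mu>" using \<mu> by (simp add: Minv_iff)
  obtain \<nu> where \<nu>: "conf_prob \<nu>"
    and \<nu>_cyl: "\<And>J u. finite J \<Longrightarrow> u \<in> patterns J \<Longrightarrow> measure \<nu> (cyl J u) = PCA_image_family N g \<mu> J u"
    using consistent_family_extension[OF consistent_family_PCA_image[OF conf]] by blast
  have "shift_invariant_family (cyl_family \<nu>)"
    by (rule shift_invariant_family_cong[OF shift_invariant_family_PCA_image[OF \<mu>]])
      (simp add: cyl_family_def \<nu>_cyl)
  with \<nu> have "\<nu> \<in> Minv" by (simp add: Minv_iff)
  then show ?thesis using \<nu>_cyl by (intro that) (auto simp: cyl_family_def)
qed

lemma Cesaro_limit_PCA_invariant:
  assumes \<mu>s: "\<And>k. \<mu>s k \<in> Minv"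
    and step: "\<And>k J u. finite J \<Longrightarrow> u \<in> patterns J \<Longrightarrow>
      cyl_family (\<mu>s (Suc k)) J u = PCA_image_family N g (\<mu>s k) J u"
    and r: "strict_mono r" and \<nu>: "conf_prob \<nu>"
    and lim: "\<And>J u. finite J \<Longrightarrow> u \<in> patterns J \<Longrightarrow>
      (\<lambda>n. (\<Sum>k\<le>r n. cyl_family (\<mu>s k) J u) / (real (r n) + 1)) \<longlonglongrightarrow> measure \<nu> (cyl J u)"
    and U: "finite U"
  shows "(\<integral>x. PCA_kernel N g x U w \<partial>\<nu>) = measure \<nu> (cyl U w)"
proof -
  let ?H = "neighbourhood N U" and ?w = "restrict w U"
  have H: "finite ?H" using finite_neighbourhood[OF finite_N U] .
  have conf: "conf_prob (\<mu>s k)" for k using \<mu>s by (simp add: Minv_iff)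
  have "(\<Sum>v\<in>patterns ?H. measure \<nu> (cyl ?H v) * PCA_kernel N g v U w) = measure \<nu> (cyl U ?w)"
  proof (rule Cesaro_limit_invariant[OF finite_patterns[OF H] _ _ r])
    show "(\<Sum>v\<in>patterns ?H. cyl_family (\<mu>s k) ?H v * PCA_kernel N g v U w) = cyl_family (\<mu>s (Suc k)) U ?w" for k
      using step[OF U, of ?w k] PCA_image_family_eq_sum[OF conf[of k] U, of ?w]
      by (simp add: cyl_family_def PCA_kernel_restrict_pattern)
    show "\<bar>cyl_family (\<mu>s k) U ?w\<bar> \<le> 1" for k
      using consistent_family_nonneg[OF consistent_family_cyl_family[OF conf] U]
        consistent_family_le_1[OF consistent_family_cyl_family[OF conf] U] by simp
    show "(\<lambda>n. (\<Sum>k\<le>r n. cyl_family (\<mu>s k) U ?w) / (real (r n) + 1)) \<longlonglongrightarrow> measure \<nu> (cyl U ?w)"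
      by (rule lim[OF U]) simp
  qed (rule lim[OF H])
  then show ?thesis
    using PCA_image_family_eq_sum[OF \<nu> U, of w] by (simp add: PCA_image_family_def cyl_restrict)
qed

theorem PCA_invariant_measure_exists:
  obtains \<nu> where "\<nu> \<in> Minv" "\<And>U w. finite U \<Longrightarrow> (\<integral>x. PCA_kernel N g x U w \<partial>\<nu>) = measure \<nu> (cyl U w)"
proof -
  obtain \<mu>0 :: "(int \<Rightarrow> 'a) measure" where \<mu>0: "\<mu>0 \<in> Minv" using Minv_nonempty by blast
  have "\<forall>\<mu>. \<exists>\<nu>. \<mu> \<in> Minv \<longrightarrow> \<nu> \<in> Minv \<and>
      (\<forall>J u. finite J \<longrightarrow> u \<in> patterns J \<longrightarrow> cyl_family \<nu> J u = PCA_image_family N g \<mu> J u)"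
    by (metis PCA_image_exists)
  then obtain F where F: "\<And>\<mu>. \<mu> \<in> Minv \<Longrightarrow> F \<mu> \<in> Minv"
    and F_cyl: "\<And>\<mu> J u. \<mu> \<in> Minv \<Longrightarrow> finite J \<Longrightarrow> u \<in> patterns J \<Longrightarrow>
        cyl_family (F \<mu>) J u = PCA_image_family N g \<mu> J u"
    by metis
  define \<mu>s where "\<mu>s k = (F ^^ k) \<mu>0" for k
  have \<mu>s: "\<mu>s k \<in> Minv" for k
    by (induction k) (simp_all add: \<mu>s_def \<mu>0 F)
  define avg where "avg n J u = (\<Sum>k\<le>n. cyl_family (\<mu>s k) J u) / (real n + 1)" for n J u
  have "consistent_family (avg n)" for n
    unfolding avg_def using \<mu>s
    by (intro consistent_family_average consistent_family_cyl_family) (simp add: Minv_iff)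
  moreover have "shift_invariant_family (avg n)" for n
    unfolding avg_def using \<mu>s by (intro shift_invariant_family_average) (simp add: Minv_iff)
  ultimately obtain r \<nu> where r: "strict_mono r" and \<nu>: "\<nu> \<in> Minv"
    and lim: "\<And>J u. finite J \<Longrightarrow> u \<in> patterns J \<Longrightarrow> (\<lambda>n. avg (r n) J u) \<longlonglongrightarrow> measure \<nu> (cyl J u)"
    using Minv_cylinder_limit[of avg] by blast
  have conf_\<nu>: "conf_prob \<nu>" using \<nu> by (simp add: Minv_iff)
  have "(\<integral>x. PCA_kernel N g x U w \<partial>\<nu>) = measure \<nu> (cyl U w)" if "finite U" for U w
  proof (rule Cesaro_limit_PCA_invariant[OF \<mu>s _ r conf_\<nu> _ that])
    show "cyl_family (\<mu>s (Suc k)) J u = PCA_image_family N g (\<mu>s k) J u"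
      if "finite J" "u \<in> patterns J" for k J u
      using F_cyl[OF \<mu>s that] by (simp add: \<mu>s_def)
    show "(\<lambda>n. (\<Sum>k\<le>r n. cyl_family (\<mu>s k) J u) / (real (r n) + 1)) \<longlonglongrightarrow> measure \<nu> (cyl J u)"
      if "finite J" "u \<in> patterns J" for J u
      using lim[OF that] by (simp add: avg_def)
  qed
  with \<nu> show ?thesis by (rule that)
qed

end

lemma Meps_nonempty:
  assumes "is_perturbation N f fe" and "e > 0"
  shows "Meps N fe e \<noteq> {}"
proof -
  interpret local_stochastic N "fe e"
    using assms unfolding is_perturbation_def by unfold_locales auto
  obtain \<nu> where "\<nu> \<in> Minv" "\<And>U w. finite U \<Longrightarrow> (\<integral>x. PCA_kernel N (fe e) x U w \<partial>\<nu>) = measure \<nu> (cyl U w)"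
    using PCA_invariant_measure_exists by blast
  then show ?thesis unfolding Meps_def by blast
qed

section \<open>The metric \<open>d\<^sub>M\<close> and the limit measures\<close>

definition dM_term :: "(int \<Rightarrow> 'a::finite) measure \<Rightarrow> (int \<Rightarrow> 'a) measure \<Rightarrow> nat \<Rightarrow> real" where
  "dM_term \<mu> \<nu> n = (1/2)^n * (1/2) *
      (\<Sum>u\<in>patterns (window n). \<bar>measure \<mu> (cyl (window n) u) - measure \<nu> (cyl (window n) u)\<bar>)"

lemma dM_eq_suminf: "dM \<mu> \<nu> = (\<Sum>n. dM_term \<mu> \<nu> n)"
  unfolding dM_def dM_term_def window_def ..

lemma dM_term_nonneg: "dM_term \<mu> \<nu> n \<ge> 0"
  unfolding dM_term_def by (intro mult_nonneg_nonneg sum_nonneg) auto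

lemma dM_term_le:
  assumes "conf_prob \<mu>" "conf_prob \<nu>"
  shows "dM_term \<mu> \<nu> n \<le> (1/2)^n"
proof -
  have total: "(\<Sum>u\<in>patterns (window n). measure \<rho> (cyl (window n) u)) = 1" if "conf_prob \<rho>"
    for \<rho> :: "(int \<Rightarrow> 'a) measure"
    using consistent_family_sum_eq_1[OF consistent_family_cyl_family[OF that]] by (simp add: cyl_family_def)
  have "(\<Sum>u\<in>patterns (window n). \<bar>measure \<mu> (cyl (window n) u) - measure \<nu> (cyl (window n) u)\<bar>)
      \<le> (\<Sum>u\<in>patterns (window n). measure \<mu> (cyl (window n) u) + measure \<nu> (cyl (window n) u))"
    by (intro sum_mono) (auto simp: abs_le_iff)
  also have "\<dots> = 2" using total[OF assms(1)] total[OF assms(2)] by (simp add: sum.distrib)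
  finally show ?thesis unfolding dM_term_def by (simp add: mult_left_mono)
qed

lemma summable_dM_term: "conf_prob \<mu> \<Longrightarrow> conf_prob \<nu> \<Longrightarrow> summable (dM_term \<mu> \<nu>)"
  by (rule summable_comparison_test'[OF summable_geometric[of "1/2"]]) (simp_all add: dM_term_nonneg dM_term_le)

lemma dM_commute: "dM \<mu> \<nu> = dM \<nu> \<mu>"
  unfolding dM_def by (simp add: abs_minus_commute)

lemma dM_triangle:
  assumes "conf_prob \<mu>" "conf_prob \<nu>" "conf_prob \<rho>"
  shows "dM \<mu> \<rho> \<le> dM \<mu> \<nu> + dM \<nu> \<rho>"
proof -
  have "dM_term \<mu> \<rho> n \<le> dM_term \<mu> \<nu> n + dM_term \<nu> \<rho> n" for n
  proof -
    have "(\<Sum>u\<in>patterns (window n). \<bar>measure \<mu> (cyl (window n) u) - measure \<rho> (cyl (window n) u)\<bar>)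
       \<le> (\<Sum>u\<in>patterns (window n). \<bar>measure \<mu> (cyl (window n) u) - measure \<nu> (cyl (window n) u)\<bar> +
          \<bar>measure \<nu> (cyl (window n) u) - measure \<rho> (cyl (window n) u)\<bar>)"
      by (intro sum_mono) auto
    then show ?thesis
      unfolding dM_term_def by (simp add: sum.distrib distrib_left[symmetric] mult_left_mono)
  qed
  then have "dM \<mu> \<rho> \<le> (\<Sum>n. dM_term \<mu> \<nu> n + dM_term \<nu> \<rho> n)"
    unfolding dM_eq_suminf by (intro suminf_le summable_add summable_dM_term assms)
  also have "\<dots> = dM \<mu> \<nu> + dM \<nu> \<rho>"
    unfolding dM_eq_suminf by (intro suminf_add[symmetric] summable_dM_term assms)
  finally show ?thesis .
qed

text \<open>Termwise convergence plus domination by \<open>2\<^sup>-\<^sup>n\<close> (Tannery's theorem).\<close>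

lemma tendsto_dM_zeroI:
  assumes \<mu>: "conf_prob \<mu>" and \<mu>s: "\<And>k. conf_prob (\<mu>s k)"
    and lim: "\<And>n u. u \<in> patterns (window n) \<Longrightarrow>
      (\<lambda>k. measure (\<mu>s k) (cyl (window n) u)) \<longlonglongrightarrow> measure \<mu> (cyl (window n) u)"
  shows "(\<lambda>k. dM (\<mu>s k) \<mu>) \<longlonglongrightarrow> 0"
proof -
  have "(\<lambda>k. dM_term (\<mu>s k) \<mu> n) \<longlonglongrightarrow> 0" for n
  proof -
    have "(\<lambda>k. dM_term (\<mu>s k) \<mu> n) \<longlonglongrightarrow> (1/2)^n * (1/2) *
      (\<Sum>u\<in>patterns (window n). \<bar>measure \<mu> (cyl (window n) u) - measure \<mu> (cyl (window n) u)\<bar>)"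
      unfolding dM_term_def by (intro tendsto_mult tendsto_const tendsto_sum tendsto_rabs tendsto_diff lim) auto
    then show ?thesis by simp
  qed
  then have "(\<lambda>k. \<Sum>n. dM_term (\<mu>s k) \<mu> n) \<longlonglongrightarrow> (\<Sum>n. 0::real)"
  proof (rule tannerys_theorem[where M = "\<lambda>n. (1/2)^n", THEN conjunct2, THEN conjunct2])
    show "\<forall>\<^sub>F (n, k) in sequentially \<times>\<^sub>F sequentially. norm (dM_term (\<mu>s k) \<mu> n) \<le> (1/2)^n"
      by (intro always_eventually) (auto simp: dM_term_nonneg dM_term_le[OF \<mu>s \<mu>])
  qed (auto intro: summable_geometric)
  then show ?thesis unfolding dM_eq_suminf by simp
qed

lemma Mlim_nonempty:
  assumes perturbation: "is_perturbation N f fe"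
  shows "Mlim N fe \<noteq> {}"
proof -
  define en where "en n = inverse (real (Suc n))" for n
  have en_pos: "en n > 0" for n by (simp add: en_def)
  have "\<forall>n. \<exists>\<mu>. \<mu> \<in> Meps N fe (en n)"
    using Meps_nonempty[OF perturbation en_pos] by blast
  then obtain \<mu>s where \<mu>s: "\<And>n. \<mu>s n \<in> Meps N fe (en n)" by metis
  then have \<mu>s_Minv: "\<mu>s n \<in> Minv" for n by (simp add: Meps_def)
  then have conf: "conf_prob (\<mu>s n)" for n by (simp add: Minv_iff)
  have "consistent_family (cyl_family (\<mu>s n))" for n
    using conf by (rule consistent_family_cyl_family)
  moreover have "shift_invariant_family (cyl_family (\<mu>s n))" for n
    using \<mu>s_Minv by (simp add: Minv_iff)
  ultimately obtain r \<mu> where r: "strict_mono r" and \<mu>: "\<mu> \<in> Minv"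
    and lim: "\<And>J u. finite J \<Longrightarrow> u \<in> patterns J \<Longrightarrow>
      (\<lambda>k. cyl_family (\<mu>s (r k)) J u) \<longlonglongrightarrow> measure \<mu> (cyl J u)"
    using Minv_cylinder_limit[of "\<lambda>n. cyl_family (\<mu>s n)"] by blast
  have "(\<lambda>k. dM (\<mu>s (r k)) \<mu>) \<longlonglongrightarrow> 0"
    using \<mu> conf lim by (intro tendsto_dM_zeroI) (auto simp: Minv_iff cyl_family_def)
  moreover have "(\<lambda>k. en (r k)) \<longlonglongrightarrow> 0"
    using LIMSEQ_subseq_LIMSEQ[OF LIMSEQ_inverse_real_of_nat r] by (simp add: en_def o_def)
  ultimately have "\<mu> \<in> Mlim N fe"
    unfolding Mlim_def using \<mu> \<mu>s en_pos
    by (intro CollectI conjI exI[of _ "\<lambda>k. en (r k)"] exI[of _ "\<lambda>k. \<mu>s (r k)"]) auto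
  then show ?thesis by blast
qed

lemma diamM_le_two_radius:
  assumes "K \<noteq> {}" "K \<subseteq> Minv" "\<rho> \<in> Minv" "\<And>\<mu>. \<mu> \<in> K \<Longrightarrow> dM \<mu> \<rho> \<le> r"
  shows "diamM K \<le> 2 * r"
proof -
  have bound: "dM \<mu> \<nu> \<le> 2 * r" if "\<mu> \<in> K" "\<nu> \<in> K" for \<mu> \<nu>
  proof -
    have "\<mu> \<in> Minv" "\<nu> \<in> Minv" using that assms(2) by auto
    then have "conf_prob \<mu>" "conf_prob \<rho>" "conf_prob \<nu>" using assms(3) by (simp_all add: Minv_iff)
    then have "dM \<mu> \<nu> \<le> dM \<mu> \<rho> + dM \<rho> \<nu>" by (rule dM_triangle)
    then show ?thesis using assms(4)[OF that(1)] assms(4)[OF that(2)] dM_commute[of \<rho> \<nu>] by linarith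
  qed
  show ?thesis unfolding diamM_def
  proof (rule cSup_least)
    show "{dM \<mu> \<nu> |\<mu> \<nu>. \<mu> \<in> K \<and> \<nu> \<in> K} \<noteq> {}" using assms(1) by blast
  qed (use bound in blast)
qed

lemma selection_far_if_possible:
  assumes "\<And>e. e > 0 \<Longrightarrow> K e \<noteq> {}"
  obtains \<pi> where "\<And>e. e > 0 \<Longrightarrow> \<pi> e \<in> K e"
    and "\<And>e \<nu>. e > 0 \<Longrightarrow> \<nu> \<in> K e \<Longrightarrow> dM \<nu> \<rho> > r \<Longrightarrow> dM (\<pi> e) \<rho> > r"
proof -
  have "\<forall>e. \<exists>\<pi>. e > 0 \<longrightarrow> \<pi> \<in> K e \<and> ((\<exists>\<nu>\<in>K e. dM \<nu> \<rho> > r) \<longrightarrow> dM \<pi> \<rho> > r)"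
    using assms by blast
  from choice[OF this] obtain \<pi> where
    "\<forall>e. e > 0 \<longrightarrow> \<pi> e \<in> K e \<and> ((\<exists>\<nu>\<in>K e. dM \<nu> \<rho> > r) \<longrightarrow> dM (\<pi> e) \<rho> > r)"
    by blast
  then show ?thesis by (intro that) blast+
qed

lemma acc_points_close_below:
  assumes "\<rho> \<in> acc_points \<pi>" "r > 0" "e0 > 0"
  obtains e where "0 < e" "e < e0" "dM (\<pi> e) \<rho> < r"
proof -
  have "\<exists>\<^sub>F e in at_right 0. dM (\<pi> e) \<rho> < r"
    using assms(1,2) unfolding acc_points_def by blast
  moreover have "\<forall>\<^sub>F e in at_right 0. 0 < e \<and> e < e0"
    unfolding eventually_at_right_field using assms(3) by blast
  ultimately have "\<exists>\<^sub>F e in at_right 0. dM (\<pi> e) \<rho> < r \<and> 0 < e \<and> e < e0"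
    by (rule frequently_eventually_frequently)
  from frequently_ex[OF this] show ?thesis using that by blast
qed

theorem mainTheorem9:
  fixes N :: "int set" and f :: "(int \<Rightarrow> 'a::finite) \<Rightarrow> 'a"
    and fe :: "real \<Rightarrow> (int \<Rightarrow> 'a) \<Rightarrow> 'a \<Rightarrow> real"
  assumes "is_perturbation N f fe"
    and "uniformly_approached N fe"
  shows "\<forall>\<delta>>0. \<forall>e0>0. \<exists>e. 0 < e \<and> e < e0 \<and> diamM (Meps N fe e) < \<delta>"
proof (intro allI impI)
  fix \<delta> e0 :: real assume \<delta>: "\<delta> > 0" and e0: "e0 > 0"
  obtain \<rho> where \<rho>: "\<rho> \<in> Mlim N fe" using Mlim_nonempty[OF assms(1)] by blast
  obtain \<pi> where \<pi>: "\<And>e. e > 0 \<Longrightarrow> \<pi> e \<in> Meps N fe e"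
    and far: "\<And>e \<nu>. e > 0 \<Longrightarrow> \<nu> \<in> Meps N fe e \<Longrightarrow> dM \<nu> \<rho> > \<delta> / 3 \<Longrightarrow> dM (\<pi> e) \<rho> > \<delta> / 3"
    using selection_far_if_possible[where K = "Meps N fe" and \<rho> = \<rho> and r = "\<delta> / 3"] Meps_nonempty[OF assms(1)] by blast
  have "acc_points \<pi> = Mlim N fe"
    using assms(2) \<pi> by (simp add: uniformly_approached_def)
  then obtain e where e: "0 < e" "e < e0" and close: "dM (\<pi> e) \<rho> < \<delta> / 3"
    using acc_points_close_below[of \<rho> \<pi> "\<delta> / 3" e0] \<rho> \<delta> e0 by auto
  have "dM \<nu> \<rho> \<le> \<delta> / 3" if "\<nu> \<in> Meps N fe e" for \<nu>
    using far[OF e(1) that] close by force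
  then have "diamM (Meps N fe e) \<le> 2 * (\<delta> / 3)"
    using Meps_nonempty[OF assms(1) e(1)] \<rho>
    by (intro diamM_le_two_radius) (auto simp: Meps_def Mlim_def)
  with e \<delta> show "\<exists>e. 0 < e \<and> e < e0 \<and> diamM (Meps N fe e) < \<delta>"
    by (intro exI[of _ e]) simp
qed

end
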